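(* Let $R$ be an almost Dedekind domain and $M\in\mathrm{Max}(R)$. Then $M$ is an isolated point of $\mathcal{M}$ if and only if $M$ is finitely generated.
   Context: $R$ almost Dedekind: $R_M$ is a DVR for every maximal $M$. $\mathcal{M}$ is $\mathrm{Max}(R)$ with the inverse topology, i.e. the restriction of the coarsest topology on $\mathrm{Spec}(R)$ in which every Zariski-open Zariski-compact subset is closed (on $\mathrm{Max}(R)$ it coincides with the constructible topology). *)

theory Defs
  imports "HOL-Analysis.Analysis" "HOL-Computational_Algebra.Fraction_Field"
begin

definition subring_of :: "'a::comm_ring_1 set \<Rightarrow> bool" where
  "subring_of S \<longleftrightarrow> 0 \<in> S \<and> 1 \<in> S \<and> (\<forall>a\<in>S. \<forall>b\<in>S. a + b \<in> S \<and> a * b \<in> S \<and> - a \<in> S)"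

definition ideal_in :: "'a::comm_ring_1 set \<Rightarrow> 'a set \<Rightarrow> bool" where
  "ideal_in S I \<longleftrightarrow> I \<subseteq> S \<and> 0 \<in> I \<and> (\<forall>a\<in>I. \<forall>b\<in>I. a + b \<in> I)
      \<and> (\<forall>r\<in>S. \<forall>a\<in>I. r * a \<in> I)"

definition prime_ideal_in :: "'a::comm_ring_1 set \<Rightarrow> 'a set \<Rightarrow> bool" where
  "prime_ideal_in S P \<longleftrightarrow> ideal_in S P \<and> P \<noteq> S
      \<and> (\<forall>a\<in>S. \<forall>b\<in>S. a * b \<in> P \<longrightarrow> a \<in> P \<or> b \<in> P)"

definition maximal_ideal_in :: "'a::comm_ring_1 set \<Rightarrow> 'a set \<Rightarrow> bool" where
  "maximal_ideal_in S M \<longleftrightarrow> ideal_in S M \<and> M \<noteq> S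
      \<and> (\<forall>J. ideal_in S J \<and> M \<subseteq> J \<longrightarrow> J = M \<or> J = S)"

definition principal_in :: "'a::comm_ring_1 set \<Rightarrow> 'a set \<Rightarrow> bool" where
  "principal_in S I \<longleftrightarrow> (\<exists>x\<in>S. I = {r * x | r. r \<in> S})"

definition is_DVR :: "'k::field set \<Rightarrow> bool" where
  "is_DVR S \<longleftrightarrow> subring_of S
      \<and> (\<forall>I. ideal_in S I \<longrightarrow> principal_in S I)
      \<and> (\<exists>!M. maximal_ideal_in S M)
      \<and> (\<exists>x\<in>S. x \<noteq> 0 \<and> inverse x \<notin> S)"

abbreviation Spec :: "'a::comm_ring_1 set set" where
  "Spec \<equiv> {P. prime_ideal_in UNIV P}"

abbreviation Max_spec :: "'a::comm_ring_1 set set" where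
  "Max_spec \<equiv> {M. maximal_ideal_in UNIV M}"

definition localization :: "'a::idom set \<Rightarrow> 'a fract set" where
  "localization M = {Fract a s | a s. s \<notin> M}"

definition almost_dedekind :: "'a::idom itself \<Rightarrow> bool" where
  "almost_dedekind TYPE('a) \<longleftrightarrow>
     (\<forall>M::'a set. maximal_ideal_in UNIV M \<longrightarrow> is_DVR (localization M))"

definition finitely_generated_ideal :: "'a::comm_ring_1 set \<Rightarrow> bool" where
  "finitely_generated_ideal I \<longleftrightarrow>
     (\<exists>F. finite F \<and> I = {\<Sum>f\<in>F. c f * f | c. True})"

definition zariski :: "'a::comm_ring_1 set topology" where
  "zariski = subtopology (topology_generated_by {{P \<in> Spec. \<not> X \<subseteq> P} | X. True}) Spec"

definition inverse_topology :: "'a::comm_ring_1 set topology" where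
  "inverse_topology = subtopology
     (topology_generated_by {Spec - U | U. openin zariski U \<and> compactin zariski U}) Spec"

definition max_inverse :: "'a::comm_ring_1 set topology" where
  "max_inverse = subtopology inverse_topology Max_spec"

definition isolated_point_in :: "'b topology \<Rightarrow> 'b \<Rightarrow> bool" where
  "isolated_point_in T x \<longleftrightarrow> x \<in> topspace T \<and> openin T {x}"

end

theory Submission
  imports Defs
begin

text \<open>The sets \<open>V(F) = {P. F \<subseteq> P}\<close> with \<open>F\<close> finite are the basic open sets of the inverse
  topology, because the Zariski-compact Zariski-open sets are exactly the \<open>D(F)\<close> with \<open>F\<close> finite.
  (Each \<open>D(f)\<close> is compact: if \<open>D(f)\<close> is covered by the \<open>D(s)\<close>, \<open>s \<in> S\<close>, some power of \<open>f\<close> lies in the ideal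
  generated by finitely many of these \<open>s\<close>, for otherwise a prime containing \<open>S\<close> and avoiding the powers
  of \<open>f\<close> would exist.) So \<open>M\<close> is isolated iff \<open>V(F) \<inter> Max(R) = {M}\<close> for some finite \<open>F \<subseteq> M\<close>.
  If \<open>M = (F)\<close>, this \<open>F\<close> works. Conversely, take \<open>t \<in> M\<close> generating the maximal ideal of the
  DVR \<open>R\<^sub>M\<close>: the ideal \<open>(F, t) \<subseteq> M\<close> agrees with \<open>M\<close> locally at every maximal ideal \<open>N\<close>, at \<open>M\<close>
  because of \<open>t\<close> and elsewhere because \<open>F \<not>\<subseteq> N\<close>, hence \<open>M = (F, t)\<close>.\<close>

lemma ideal_zero: "ideal_in UNIV I \<Longrightarrow> 0 \<in> I"
  by (simp add: ideal_in_def)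

lemma ideal_add: "ideal_in UNIV I \<Longrightarrow> a \<in> I \<Longrightarrow> b \<in> I \<Longrightarrow> a + b \<in> I"
  by (simp add: ideal_in_def)

lemma ideal_mult: "ideal_in UNIV I \<Longrightarrow> a \<in> I \<Longrightarrow> r * a \<in> I"
  by (simp add: ideal_in_def)

lemma ideal_intro:
  assumes "0 \<in> I" "\<And>a b. a \<in> I \<Longrightarrow> b \<in> I \<Longrightarrow> a + b \<in> I" "\<And>r a. a \<in> I \<Longrightarrow> r * a \<in> I"
  shows "ideal_in UNIV I"
  using assms by (simp add: ideal_in_def)

lemma ideal_eq_UNIV_iff_one:
  assumes "ideal_in UNIV I" shows "I = UNIV \<longleftrightarrow> 1 \<in> I"
  using ideal_mult[OF assms, of 1] by (metis UNIV_I UNIV_eq_I mult.right_neutral)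

lemma ideal_sum:
  assumes "ideal_in UNIV I" "finite F" "\<And>f. f \<in> F \<Longrightarrow> g f \<in> I"
  shows "sum g F \<in> I"
  using assms(2,3)
  by (induction F rule: finite_induct) (auto intro: ideal_zero[OF assms(1)] ideal_add[OF assms(1)])

lemma maximal_ideal_ideal: "maximal_ideal_in UNIV M \<Longrightarrow> ideal_in UNIV M"
  by (simp add: maximal_ideal_in_def)

lemma prime_ideal_ideal: "prime_ideal_in UNIV P \<Longrightarrow> ideal_in UNIV P"
  by (simp add: prime_ideal_in_def)

lemma prime_ideal_mult_notin:
  "prime_ideal_in UNIV P \<Longrightarrow> x \<notin> P \<Longrightarrow> y \<notin> P \<Longrightarrow> x * y \<notin> P"
  unfolding prime_ideal_in_def by blast

lemma prime_ideal_one_notin: "prime_ideal_in UNIV P \<Longrightarrow> 1 \<notin> P"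
  using ideal_eq_UNIV_iff_one prime_ideal_ideal by (auto simp: prime_ideal_in_def)

lemma prime_ideal_power_notin:
  assumes "prime_ideal_in UNIV P" "f \<notin> P" shows "f ^ n \<notin> P"
  by (induction n) (simp_all add: assms prime_ideal_one_notin prime_ideal_mult_notin)

lemma ideal_Union_directed:
  assumes "C \<noteq> {}" "\<And>X. X \<in> C \<Longrightarrow> ideal_in UNIV X"
    and "\<And>X Y. X \<in> C \<Longrightarrow> Y \<in> C \<Longrightarrow> \<exists>Z\<in>C. X \<union> Y \<subseteq> Z"
  shows "ideal_in UNIV (\<Union>C)"
proof (rule ideal_intro)
  obtain X where "X \<in> C" using assms(1) by blast
  then show "0 \<in> \<Union>C" using ideal_zero[OF assms(2)] by blast
  show "a + b \<in> \<Union>C" if ab: "a \<in> \<Union>C" "b \<in> \<Union>C" for a b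
  proof -
    obtain X Y where "X \<in> C" "Y \<in> C" "a \<in> X" "b \<in> Y" using ab by blast
    then obtain Z where Z: "Z \<in> C" "a \<in> Z" "b \<in> Z" using assms(3) by blast
    then have "a + b \<in> Z" using ideal_add[OF assms(2)] by blast
    then show ?thesis using Z(1) by blast
  qed
  show "r * a \<in> \<Union>C" if "a \<in> \<Union>C" for r a
  proof -
    obtain X where X: "X \<in> C" "a \<in> X" using \<open>a \<in> \<Union>C\<close> by blast
    then have "r * a \<in> X" using ideal_mult[OF assms(2)] by blast
    then show ?thesis using X(1) by blast
  qed
qed

definition ideal_adjoin :: "'a::comm_ring_1 \<Rightarrow> 'a set \<Rightarrow> 'a set" where
  "ideal_adjoin x P = {p + r * x | p r. p \<in> P}"

lemma ideal_adjoin_ideal: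
  assumes "ideal_in UNIV P" shows "ideal_in UNIV (ideal_adjoin x P)"
proof (rule ideal_intro)
  have "0 + 0 * x \<in> ideal_adjoin x P"
    unfolding ideal_adjoin_def using ideal_zero[OF assms] by blast
  then show "0 \<in> ideal_adjoin x P" by simp
  show "a + b \<in> ideal_adjoin x P" if ab: "a \<in> ideal_adjoin x P" "b \<in> ideal_adjoin x P" for a b
  proof -
    obtain p q r s where "p \<in> P" "q \<in> P" "a = p + r * x" "b = q + s * x"
      using ab unfolding ideal_adjoin_def by blast
    then have "a + b = (p + q) + (r + s) * x" "p + q \<in> P"
      using ideal_add[OF assms] by (auto simp: algebra_simps)
    then show ?thesis unfolding ideal_adjoin_def by blast
  qed
  show "c * a \<in> ideal_adjoin x P" if a: "a \<in> ideal_adjoin x P" for c a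
  proof -
    obtain p r where p: "p \<in> P" and "a = p + r * x"
      using a unfolding ideal_adjoin_def by blast
    then have "c * a = c * p + (c * r) * x"
      by (simp add: algebra_simps)
    moreover have "c * p \<in> P"
      using ideal_mult[OF assms p] .
    ultimately show ?thesis unfolding ideal_adjoin_def by blast
  qed
qed

lemma subset_ideal_adjoin: "P \<subseteq> ideal_adjoin x P"
proof
  fix p assume "p \<in> P"
  then have "p + 0 * x \<in> ideal_adjoin x P" unfolding ideal_adjoin_def by blast
  then show "p \<in> ideal_adjoin x P" by simp
qed

lemma mem_ideal_adjoin:
  assumes "ideal_in UNIV P" shows "x \<in> ideal_adjoin x P"
proof -
  have "0 + 1 * x \<in> ideal_adjoin x P"
    unfolding ideal_adjoin_def using ideal_zero[OF assms] by blast
  then show ?thesis by simp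
qed

definition ideal_generated :: "'a::comm_ring_1 set \<Rightarrow> 'a set" where
  "ideal_generated F = {\<Sum>f\<in>F. c f * f | c. True}"

lemma ideal_generatedI: "a = (\<Sum>f\<in>F. c f * f) \<Longrightarrow> a \<in> ideal_generated F"
  unfolding ideal_generated_def by blast

lemma ideal_generatedE:
  assumes "a \<in> ideal_generated F" obtains c where "a = (\<Sum>f\<in>F. c f * f)"
  using assms unfolding ideal_generated_def by blast

lemma finitely_generated_ideal_iff:
  "finitely_generated_ideal I \<longleftrightarrow> (\<exists>F. finite F \<and> I = ideal_generated F)"
  by (simp add: finitely_generated_ideal_def ideal_generated_def)

lemma ideal_generated_ideal: "ideal_in UNIV (ideal_generated F)"
proof (rule ideal_intro)
  show "0 \<in> ideal_generated F"
    by (rule ideal_generatedI[where c = "\<lambda>_. 0"]) simp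
  show "a + b \<in> ideal_generated F" if ab: "a \<in> ideal_generated F" "b \<in> ideal_generated F" for a b
  proof -
    obtain c d where "a = (\<Sum>f\<in>F. c f * f)" "b = (\<Sum>f\<in>F. d f * f)"
      using ab by (elim ideal_generatedE)
    then have "a + b = (\<Sum>f\<in>F. (c f + d f) * f)"
      by (simp add: sum.distrib distrib_right)
    then show ?thesis by (rule ideal_generatedI)
  qed
  show "r * a \<in> ideal_generated F" if a: "a \<in> ideal_generated F" for r a
  proof -
    obtain c where "a = (\<Sum>f\<in>F. c f * f)"
      using a by (elim ideal_generatedE)
    then have "r * a = (\<Sum>f\<in>F. (r * c f) * f)"
      by (simp add: sum_distrib_left mult.assoc)
    then show ?thesis by (rule ideal_generatedI)
  qed
qed

lemma generator_in_ideal_generated: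
  assumes "finite F" "x \<in> F" shows "x \<in> ideal_generated F"
proof -
  have "x = (\<Sum>f\<in>F. if f = x then x else 0)"
    using assms by simp
  also have "\<dots> = (\<Sum>f\<in>F. (if f = x then 1 else 0) * f)"
    by (rule sum.cong) auto
  finally show ?thesis by (rule ideal_generatedI)
qed

lemma ideal_generated_subset:
  assumes "ideal_in UNIV I" "finite F" "F \<subseteq> I" shows "ideal_generated F \<subseteq> I"
proof
  fix a assume "a \<in> ideal_generated F"
  then obtain c where "a = (\<Sum>f\<in>F. c f * f)" by (elim ideal_generatedE)
  moreover have "(\<Sum>f\<in>F. c f * f) \<in> I"
    using assms(3) by (intro ideal_sum[OF assms(1,2)] ideal_mult[OF assms(1)]) blast
  ultimately show "a \<in> I" by simp
qed

lemma ideal_generated_mono: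
  assumes "finite G" "finite H" "G \<subseteq> H" shows "ideal_generated G \<subseteq> ideal_generated H"
  using assms by (intro ideal_generated_subset ideal_generated_ideal) (auto intro: generator_in_ideal_generated)

section \<open>Prime ideals avoiding a multiplicative set\<close>

lemma maximal_disjoint_ideal_exists:
  fixes K T :: "'a::comm_ring_1 set"
  assumes "ideal_in UNIV K" "K \<inter> T = {}"
  obtains P where "ideal_in UNIV P" "K \<subseteq> P" "P \<inter> T = {}"
    "\<And>J. ideal_in UNIV J \<Longrightarrow> P \<subseteq> J \<Longrightarrow> J \<inter> T = {} \<Longrightarrow> J = P"
proof -
  define A where "A = {P. ideal_in UNIV P \<and> K \<subseteq> P \<and> P \<inter> T = {}}"
  have "\<exists>P\<in>A. \<forall>J\<in>A. P \<subseteq> J \<longrightarrow> J = P"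
  proof (rule subset_Zorn_nonempty)
    show "A \<noteq> {}" using assms unfolding A_def by blast
    fix C assume C: "C \<noteq> {}" "subset.chain A C"
    then have "C \<subseteq> A" and chain: "\<And>X Y. X \<in> C \<Longrightarrow> Y \<in> C \<Longrightarrow> X \<subseteq> Y \<or> Y \<subseteq> X"
      by (auto simp: subset_chain_def)
    have "ideal_in UNIV (\<Union>C)"
    proof (rule ideal_Union_directed[OF C(1)])
      show "ideal_in UNIV X" if "X \<in> C" for X
        using that \<open>C \<subseteq> A\<close> unfolding A_def by blast
      show "\<exists>Z\<in>C. X \<union> Y \<subseteq> Z" if XY: "X \<in> C" "Y \<in> C" for X Y
      proof (cases "X \<subseteq> Y")
        case True
        then show ?thesis using XY(2) by blast
      next
        case False
        then show ?thesis using chain[OF XY] XY(1) by blast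
      qed
    qed
    moreover have "K \<subseteq> \<Union>C" "\<Union>C \<inter> T = {}"
      using C(1) \<open>C \<subseteq> A\<close> unfolding A_def by blast+
    ultimately show "\<Union>C \<in> A" unfolding A_def by blast
  qed
  then obtain P where P: "P \<in> A" and maximal: "\<And>J. J \<in> A \<Longrightarrow> P \<subseteq> J \<Longrightarrow> J = P"
    by blast
  show thesis
  proof (rule that)
    show "ideal_in UNIV P" "K \<subseteq> P" "P \<inter> T = {}" using P unfolding A_def by blast+
    show "J = P" if "ideal_in UNIV J" "P \<subseteq> J" "J \<inter> T = {}" for J
      using maximal[of J] that \<open>K \<subseteq> P\<close> unfolding A_def by blast
  qed
qed

lemma prime_ideal_if_maximal_disjoint:
  fixes P T :: "'a::comm_ring_1 set"
  assumes P: "ideal_in UNIV P" and PT: "P \<inter> T = {}"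
    and T: "1 \<in> T" "\<And>a b. a \<in> T \<Longrightarrow> b \<in> T \<Longrightarrow> a * b \<in> T"
    and maximal: "\<And>J. ideal_in UNIV J \<Longrightarrow> P \<subseteq> J \<Longrightarrow> J \<inter> T = {} \<Longrightarrow> J = P"
  shows "prime_ideal_in UNIV P"
proof -
  have meets: "\<exists>p r. p \<in> P \<and> p + r * x \<in> T" if "x \<notin> P" for x
  proof -
    have "ideal_adjoin x P \<noteq> P" using mem_ideal_adjoin[OF P] that by blast
    then have "ideal_adjoin x P \<inter> T \<noteq> {}"
      using maximal[OF ideal_adjoin_ideal[OF P] subset_ideal_adjoin] by blast
    then show ?thesis unfolding ideal_adjoin_def by blast
  qed
  have "a \<in> P \<or> b \<in> P" if ab: "a * b \<in> P" for a b
  proof (rule ccontr)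
    assume "\<not> (a \<in> P \<or> b \<in> P)"
    then obtain p r q s where pq: "p \<in> P" "p + r * a \<in> T" "q \<in> P" "q + s * b \<in> T"
      using meets by meson
    then have T_prod: "(p + r * a) * (q + s * b) \<in> T" by (intro T(2))
    have "(p + r * a) * (q + s * b) = (q + s * b) * p + (r * a) * q + (r * s) * (a * b)"
      by (simp add: algebra_simps)
    also have "\<dots> \<in> P"
      using ideal_mult[OF P pq(1)] ideal_mult[OF P pq(3)] ideal_mult[OF P ab]
      by (blast intro: ideal_add[OF P])
    finally show False using T_prod PT by blast
  qed
  moreover have "P \<noteq> UNIV" using PT T(1) by blast
  ultimately show ?thesis unfolding prime_ideal_in_def using P by blast
qed

lemma prime_ideal_disjoint_exists:
  fixes K T :: "'a::comm_ring_1 set"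
  assumes "ideal_in UNIV K" "K \<inter> T = {}"
    and "1 \<in> T" "\<And>a b. a \<in> T \<Longrightarrow> b \<in> T \<Longrightarrow> a * b \<in> T"
  obtains P where "prime_ideal_in UNIV P" "K \<subseteq> P" "P \<inter> T = {}"
proof (rule maximal_disjoint_ideal_exists[OF assms(1,2)])
  fix P assume P: "ideal_in UNIV P" "K \<subseteq> P" "P \<inter> T = {}"
    and maximal: "\<And>J. ideal_in UNIV J \<Longrightarrow> P \<subseteq> J \<Longrightarrow> J \<inter> T = {} \<Longrightarrow> J = P"
  have "prime_ideal_in UNIV P"
    by (rule prime_ideal_if_maximal_disjoint[OF P(1,3) assms(3,4) maximal])
  then show thesis using P(2,3) by (rule that)
qed

lemma prime_ideal_avoiding_powers_exists:
  fixes K :: "'a::comm_ring_1 set"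
  assumes "ideal_in UNIV K" "\<And>n. f ^ n \<notin> K"
  obtains P where "prime_ideal_in UNIV P" "K \<subseteq> P" "f \<notin> P"
proof -
  let ?T = "range (\<lambda>n. f ^ n)"
  have disjoint: "K \<inter> ?T = {}" using assms(2) by blast
  have one: "1 \<in> ?T" by (metis power_0 rangeI)
  have mult: "a * b \<in> ?T" if "a \<in> ?T" "b \<in> ?T" for a b
    using that by (auto simp: power_add[symmetric])
  show thesis
  proof (rule prime_ideal_disjoint_exists[OF assms(1) disjoint one mult])
    fix P assume "prime_ideal_in UNIV P" "K \<subseteq> P" "P \<inter> ?T = {}"
    moreover have "f \<in> ?T" by (metis power_one_right rangeI)
    ultimately show thesis using that by blast
  qed
qed

lemma maximal_imp_prime_ideal:
  fixes M :: "'a::comm_ring_1 set"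
  assumes "maximal_ideal_in UNIV M" shows "prime_ideal_in UNIV M"
proof (rule prime_ideal_if_maximal_disjoint[of M "{1}"])
  show M: "ideal_in UNIV M" using assms by (rule maximal_ideal_ideal)
  show "M \<inter> {1} = {}"
    using assms ideal_eq_UNIV_iff_one[OF M] unfolding maximal_ideal_in_def by blast
  show "J = M" if "ideal_in UNIV J" "M \<subseteq> J" "J \<inter> {1} = {}" for J
  proof -
    have "J = M \<or> J = UNIV" using assms that(1,2) unfolding maximal_ideal_in_def by blast
    then show ?thesis using that(3) by blast
  qed
qed auto

lemma maximal_ideal_containing_exists:
  fixes K :: "'a::comm_ring_1 set"
  assumes K: "ideal_in UNIV K" "1 \<notin> K"
  obtains N where "maximal_ideal_in UNIV N" "K \<subseteq> N"
proof (rule maximal_disjoint_ideal_exists[of K "{1}"])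
  show "ideal_in UNIV K" by (rule K(1))
  show "K \<inter> {1} = {}" using K(2) by blast
  fix N assume N: "ideal_in UNIV N" "K \<subseteq> N" "N \<inter> {1} = {}"
    and maximal: "\<And>J. ideal_in UNIV J \<Longrightarrow> N \<subseteq> J \<Longrightarrow> J \<inter> {1} = {} \<Longrightarrow> J = N"
  have "maximal_ideal_in UNIV N"
    unfolding maximal_ideal_in_def
  proof (intro conjI allI impI)
    show "ideal_in UNIV N" by (rule N(1))
    show "N \<noteq> UNIV" using N(3) by blast
    fix J assume J: "ideal_in UNIV J \<and> N \<subseteq> J"
    show "J = N \<or> J = UNIV"
    proof (cases "1 \<in> J")
      case True
      then show ?thesis using J ideal_eq_UNIV_iff_one by blast
    next
      case False
      then show ?thesis using J maximal by blast
    qed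
  qed
  then show thesis using N(2) by (rule that)
qed

section \<open>Basic open sets of the Zariski topology\<close>

definition basic_open :: "'a::comm_ring_1 \<Rightarrow> 'a set set" where
  "basic_open f = {P. prime_ideal_in UNIV P \<and> f \<notin> P}"

lemma openin_zariski_iff:
  "openin zariski U \<longleftrightarrow>
    (\<exists>W. generate_topology_on {{P \<in> Spec. \<not> X \<subseteq> P} | X. True} W \<and> U = W \<inter> Spec)"
  by (simp add: zariski_def openin_subtopology openin_topology_generated_by_iff)

lemma openin_zariski_primes_not_containing: "openin zariski {P \<in> Spec. \<not> X \<subseteq> P}"
  unfolding openin_zariski_iff by (blast intro: generate_topology_on.Basis)

lemma openin_zariski_basic_open: "openin zariski (basic_open f)"
proof -
  have "basic_open f = {P \<in> Spec. \<not> {f} \<subseteq> P}" by (auto simp: basic_open_def)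
  then show ?thesis using openin_zariski_primes_not_containing by metis
qed

lemma basic_open_mult_subset: "basic_open (x * y) \<subseteq> basic_open x \<inter> basic_open y"
proof
  fix Q assume "Q \<in> basic_open (x * y)"
  then have Q: "prime_ideal_in UNIV Q" and xy: "x * y \<notin> Q" by (auto simp: basic_open_def)
  have "x \<notin> Q" using xy ideal_mult[OF prime_ideal_ideal[OF Q], of x y] by (metis mult.commute)
  moreover have "y \<notin> Q" using xy ideal_mult[OF prime_ideal_ideal[OF Q], of y x] by blast
  ultimately show "Q \<in> basic_open x \<inter> basic_open y" using Q by (simp add: basic_open_def)
qed

lemma zariski_basic_open_nhd:
  assumes "openin zariski U" "P \<in> U"
  obtains f where "P \<in> basic_open f" "basic_open f \<subseteq> U"
proof -
  obtain W where W: "generate_topology_on {{P \<in> Spec. \<not> X \<subseteq> P} | X. True} W" "U = W \<inter> Spec"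
    using assms(1) unfolding openin_zariski_iff by blast
  have "\<exists>f. f \<notin> P \<and> basic_open f \<subseteq> W" if "P \<in> W" "prime_ideal_in UNIV P" for P
    using W(1) that
  proof (induction arbitrary: P)
    case (Int a b)
    then obtain x y where "x \<notin> P" "basic_open x \<subseteq> a" "y \<notin> P" "basic_open y \<subseteq> b"
      by blast
    then have "x * y \<notin> P" "basic_open (x * y) \<subseteq> a \<inter> b"
      using prime_ideal_mult_notin[OF Int.prems(2)] basic_open_mult_subset[of x y] by blast+
    then show ?case by blast
  next
    case (UN K)
    then show ?case by blast
  next
    case (Basis s)
    then obtain X x where "s = {P \<in> Spec. \<not> X \<subseteq> P}" "x \<in> X" "x \<notin> P" by blast
    then have "x \<notin> P" "basic_open x \<subseteq> s" by (auto simp: basic_open_def)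
    then show ?case by blast
  qed simp
  moreover have "P \<in> W" "prime_ideal_in UNIV P" using assms(2) W(2) by auto
  ultimately obtain f where "f \<notin> P" "basic_open f \<subseteq> W" by blast
  show thesis
  proof (rule that)
    show "P \<in> basic_open f" using \<open>f \<notin> P\<close> \<open>prime_ideal_in UNIV P\<close> by (simp add: basic_open_def)
    show "basic_open f \<subseteq> U" using \<open>basic_open f \<subseteq> W\<close> W(2) by (auto simp: basic_open_def)
  qed
qed

lemma power_in_ideal_generated_if_basic_open_covered:
  fixes f :: "'a::comm_ring_1"
  assumes cover: "basic_open f \<subseteq> (\<Union>s\<in>S. basic_open s)"
  obtains n G where "finite G" "G \<subseteq> S" "f ^ n \<in> ideal_generated G"
proof -
  define \<K> where "\<K> = {ideal_generated G | G. finite G \<and> G \<subseteq> S}"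
  have K: "ideal_in UNIV (\<Union>\<K>)"
  proof (rule ideal_Union_directed)
    show "\<K> \<noteq> {}" unfolding \<K>_def by blast
    show "ideal_in UNIV X" if "X \<in> \<K>" for X
      using that ideal_generated_ideal unfolding \<K>_def by blast
    show "\<exists>Z\<in>\<K>. X \<union> Y \<subseteq> Z" if XY: "X \<in> \<K>" "Y \<in> \<K>" for X Y
    proof -
      obtain G H where GH: "finite G" "G \<subseteq> S" "X = ideal_generated G"
        "finite H" "H \<subseteq> S" "Y = ideal_generated H"
        using XY unfolding \<K>_def by blast
      then have "X \<union> Y \<subseteq> ideal_generated (G \<union> H)"
        using ideal_generated_mono[of _ "G \<union> H"] by simp
      moreover have "ideal_generated (G \<union> H) \<in> \<K>" using GH unfolding \<K>_def by blast
      ultimately show ?thesis by blast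
    qed
  qed
  have "\<exists>n. f ^ n \<in> \<Union>\<K>"
  proof (rule ccontr)
    assume "\<nexists>n. f ^ n \<in> \<Union>\<K>"
    then have "\<And>n. f ^ n \<notin> \<Union>\<K>" by blast
    then obtain P where P: "prime_ideal_in UNIV P" "\<Union>\<K> \<subseteq> P" "f \<notin> P"
      by (rule prime_ideal_avoiding_powers_exists[OF K])
    then have "P \<in> (\<Union>s\<in>S. basic_open s)" using cover by (simp add: basic_open_def subset_iff)
    then obtain s where "s \<in> S" "s \<notin> P" by (auto simp: basic_open_def)
    moreover have "ideal_generated {s} \<in> \<K>" using \<open>s \<in> S\<close> unfolding \<K>_def by blast
    then have "s \<in> \<Union>\<K>" using generator_in_ideal_generated[of "{s}" s] by blast
    ultimately show False using P(2) by blast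
  qed
  then obtain n G where "finite G" "G \<subseteq> S" "f ^ n \<in> ideal_generated G"
    unfolding \<K>_def by blast
  then show thesis by (rule that)
qed

lemma basic_open_subset_if_power_in_ideal_generated:
  assumes "finite G" "f ^ n \<in> ideal_generated G"
  shows "basic_open f \<subseteq> (\<Union>s\<in>G. basic_open s)"
proof
  fix P assume "P \<in> basic_open f"
  then have P: "prime_ideal_in UNIV P" "f \<notin> P" by (auto simp: basic_open_def)
  then have "f ^ n \<notin> P" by (rule prime_ideal_power_notin)
  then have "\<not> G \<subseteq> P"
    using ideal_generated_subset[OF prime_ideal_ideal[OF P(1)] assms(1)] assms(2) by blast
  then show "P \<in> (\<Union>s\<in>G. basic_open s)" using P(1) by (auto simp: basic_open_def)
qed

lemma compactin_zariski_basic_open: "compactin zariski (basic_open f)"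
  unfolding compactin_def
proof (intro conjI allI impI)
  show "basic_open f \<subseteq> topspace zariski"
    by (rule openin_subset[OF openin_zariski_basic_open])
  fix \<U> assume \<U>: "(\<forall>U\<in>\<U>. openin zariski U) \<and> basic_open f \<subseteq> \<Union>\<U>"
  define S where "S = {s. \<exists>U\<in>\<U>. basic_open s \<subseteq> U}"
  have "basic_open f \<subseteq> (\<Union>s\<in>S. basic_open s)"
  proof
    fix P assume "P \<in> basic_open f"
    then obtain U where "U \<in> \<U>" "P \<in> U" using \<U> by blast
    moreover have "openin zariski U" using \<U> \<open>U \<in> \<U>\<close> by blast
    then obtain s where "P \<in> basic_open s" "basic_open s \<subseteq> U"
      using zariski_basic_open_nhd \<open>P \<in> U\<close> by blast
    ultimately show "P \<in> (\<Union>s\<in>S. basic_open s)" unfolding S_def by blast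
  qed
  then obtain n G where G: "finite G" "G \<subseteq> S" "f ^ n \<in> ideal_generated G"
    by (rule power_in_ideal_generated_if_basic_open_covered)
  then have "\<forall>s\<in>G. \<exists>U. U \<in> \<U> \<and> basic_open s \<subseteq> U" unfolding S_def by blast
  then obtain U where U: "\<forall>s\<in>G. U s \<in> \<U> \<and> basic_open s \<subseteq> U s" by metis
  show "\<exists>\<F>. finite \<F> \<and> \<F> \<subseteq> \<U> \<and> basic_open f \<subseteq> \<Union>\<F>"
  proof (intro exI conjI)
    show "finite (U ` G)" using G(1) by simp
    show "U ` G \<subseteq> \<U>" using U by blast
    show "basic_open f \<subseteq> \<Union>(U ` G)"
      using basic_open_subset_if_power_in_ideal_generated[OF G(1,3)] U by blast
  qed
qed

lemma primes_not_containing_eq_UN_basic_open: "{P \<in> Spec. \<not> F \<subseteq> P} = (\<Union>f\<in>F. basic_open f)"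
  by (auto simp: basic_open_def)

lemma compactin_zariski_primes_not_containing:
  "finite F \<Longrightarrow> compactin zariski {P \<in> Spec. \<not> F \<subseteq> P}"
  unfolding primes_not_containing_eq_UN_basic_open
  by (intro compactin_Union) (auto simp: compactin_zariski_basic_open)

lemma zariski_compact_open_eq_primes_not_containing:
  assumes "openin zariski U" "compactin zariski U"
  obtains F where "finite F" "U = {P \<in> Spec. \<not> F \<subseteq> P}"
proof -
  let ?B = "{f. basic_open f \<subseteq> U}"
  have "U \<subseteq> \<Union>(basic_open ` ?B)"
  proof
    fix P assume "P \<in> U"
    then obtain f where "P \<in> basic_open f" "basic_open f \<subseteq> U"
      using zariski_basic_open_nhd[OF assms(1)] by blast
    then show "P \<in> \<Union>(basic_open ` ?B)" by blast
  qed
  moreover have "\<forall>V\<in>basic_open ` ?B. openin zariski V"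
    using openin_zariski_basic_open by blast
  ultimately obtain \<F> where "finite \<F>" "\<F> \<subseteq> basic_open ` ?B" "U \<subseteq> \<Union>\<F>"
    using assms(2) unfolding compactin_def by meson
  then obtain F where "F \<subseteq> ?B" "finite F" "\<F> = basic_open ` F"
    using finite_subset_image by meson
  then have "U = {P \<in> Spec. \<not> F \<subseteq> P}"
    unfolding primes_not_containing_eq_UN_basic_open using \<open>U \<subseteq> \<Union>\<F>\<close> by blast
  with \<open>finite F\<close> show thesis by (rule that)
qed

section \<open>The inverse topology\<close>

lemma openin_inverse_topology_iff:
  "openin inverse_topology W \<longleftrightarrow>
    (\<exists>W'. generate_topology_on {Spec - U | U. openin zariski U \<and> compactin zariski U} W'
      \<and> W = W' \<inter> Spec)"
  by (simp add: inverse_topology_def openin_subtopology openin_topology_generated_by_iff)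

lemma openin_inverse_topology_primes_containing:
  assumes "finite F" shows "openin inverse_topology {P \<in> Spec. F \<subseteq> P}"
proof -
  have "generate_topology_on {Spec - U | U. openin zariski U \<and> compactin zariski U}
      (Spec - {P \<in> Spec. \<not> F \<subseteq> P})"
    using openin_zariski_primes_not_containing compactin_zariski_primes_not_containing[OF assms]
    by (blast intro: generate_topology_on.Basis)
  moreover have "{P \<in> Spec. F \<subseteq> P} = (Spec - {P \<in> Spec. \<not> F \<subseteq> P}) \<inter> Spec" by blast
  ultimately show ?thesis unfolding openin_inverse_topology_iff by blast
qed

lemma inverse_topology_primes_containing_nhd:
  assumes "openin inverse_topology W" "P \<in> W"
  obtains F where "finite F" "F \<subseteq> P" "{Q \<in> Spec. F \<subseteq> Q} \<subseteq> W"
proof -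
  obtain W' where W': "generate_topology_on {Spec - U | U. openin zariski U \<and> compactin zariski U} W'"
    "W = W' \<inter> Spec"
    using assms(1) unfolding openin_inverse_topology_iff by blast
  have nhd: "\<exists>F. finite F \<and> F \<subseteq> P \<and> {Q \<in> Spec. F \<subseteq> Q} \<subseteq> W'" if "P \<in> W'" for P
    using W'(1) that
  proof (induction arbitrary: P)
    case (Int a b)
    have "P \<in> a" "P \<in> b" using Int.prems by auto
    obtain F where "finite F" "F \<subseteq> P" "{Q \<in> Spec. F \<subseteq> Q} \<subseteq> a"
      using Int.IH(1)[OF \<open>P \<in> a\<close>] by blast
    moreover obtain G where "finite G" "G \<subseteq> P" "{Q \<in> Spec. G \<subseteq> Q} \<subseteq> b"
      using Int.IH(2)[OF \<open>P \<in> b\<close>] by blast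
    ultimately have "finite (F \<union> G)" "F \<union> G \<subseteq> P" "{Q \<in> Spec. F \<union> G \<subseteq> Q} \<subseteq> a \<inter> b"
      by auto
    then show ?case by blast
  next
    case (UN K)
    obtain k where "P \<in> k" "k \<in> K" using UN.prems by (rule UnionE)
    then obtain F where F: "finite F" "F \<subseteq> P" "{Q \<in> Spec. F \<subseteq> Q} \<subseteq> k"
      using UN.IH by meson
    have "{Q \<in> Spec. F \<subseteq> Q} \<subseteq> \<Union>K"
      using F(3) Union_upper[OF \<open>k \<in> K\<close>] by (rule subset_trans)
    then show ?case using F(1,2) by blast
  next
    case (Basis s)
    from Basis.hyps obtain U where U: "s = Spec - U" "openin zariski U" "compactin zariski U" by blast
    obtain F where F: "finite F" "U = {Q \<in> Spec. \<not> F \<subseteq> Q}"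
      by (rule zariski_compact_open_eq_primes_not_containing[OF U(2,3)])
    moreover have "F \<subseteq> P" using Basis.prems U(1) F(2) by blast
    moreover have "{Q \<in> Spec. F \<subseteq> Q} \<subseteq> s" using U(1) F(2) by blast
    ultimately show ?case by blast
  qed simp
  have "P \<in> W'" using assms(2) W'(2) by blast
  then obtain F where F: "finite F" "F \<subseteq> P" "{Q \<in> Spec. F \<subseteq> Q} \<subseteq> W'"
    using nhd by meson
  have "{Q \<in> Spec. F \<subseteq> Q} \<subseteq> W" using F(3) W'(2) by blast
  with F(1,2) show thesis by (rule that)
qed

lemma isolated_point_max_inverse_iff:
  assumes "maximal_ideal_in UNIV M"
  shows "isolated_point_in max_inverse M \<longleftrightarrow>
    (\<exists>F. finite F \<and> F \<subseteq> M \<and> (\<forall>N. maximal_ideal_in UNIV N \<and> F \<subseteq> N \<longrightarrow> N = M))"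
proof
  assume "isolated_point_in max_inverse M"
  then obtain W where W: "openin inverse_topology W" "{M} = W \<inter> Max_spec"
    unfolding isolated_point_in_def max_inverse_def openin_subtopology by blast
  then have "M \<in> W" by blast
  then obtain F where F: "finite F" "F \<subseteq> M" "{Q \<in> Spec. F \<subseteq> Q} \<subseteq> W"
    by (rule inverse_topology_primes_containing_nhd[OF W(1)])
  have "N = M" if "maximal_ideal_in UNIV N" "F \<subseteq> N" for N
  proof -
    have "N \<in> W" using maximal_imp_prime_ideal[OF that(1)] that(2) F(3) by blast
    then show ?thesis using that(1) W(2) by blast
  qed
  then show "\<exists>F. finite F \<and> F \<subseteq> M \<and> (\<forall>N. maximal_ideal_in UNIV N \<and> F \<subseteq> N \<longrightarrow> N = M)"
    using F(1,2) by blast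
next
  assume "\<exists>F. finite F \<and> F \<subseteq> M \<and> (\<forall>N. maximal_ideal_in UNIV N \<and> F \<subseteq> N \<longrightarrow> N = M)"
  then obtain F where F: "finite F" "F \<subseteq> M" "\<forall>N. maximal_ideal_in UNIV N \<and> F \<subseteq> N \<longrightarrow> N = M"
    by blast
  have "{M} = {P \<in> Spec. F \<subseteq> P} \<inter> Max_spec"
  proof
    show "{M} \<subseteq> {P \<in> Spec. F \<subseteq> P} \<inter> Max_spec"
      using F(2) assms maximal_imp_prime_ideal by blast
    show "{P \<in> Spec. F \<subseteq> P} \<inter> Max_spec \<subseteq> {M}"
      using F(3) by blast
  qed
  then have "openin max_inverse {M}"
    unfolding max_inverse_def openin_subtopology
    using openin_inverse_topology_primes_containing[OF F(1)] by blast
  then show "isolated_point_in max_inverse M"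
    unfolding isolated_point_in_def using openin_subset by blast
qed

section \<open>Local generators\<close>

lemma ideal_in_localization:
  fixes M :: "'a::idom set"
  assumes M: "prime_ideal_in UNIV M"
  shows "ideal_in (localization M) {Fract a s | a s. a \<in> M \<and> s \<notin> M}"
    (is "ideal_in _ ?m")
proof -
  have nonzero: "s \<noteq> 0" if "s \<notin> M" for s
    using that ideal_zero[OF prime_ideal_ideal[OF M]] by blast
  have "?m \<subseteq> localization M" unfolding localization_def by blast
  moreover have "0 \<in> ?m"
    unfolding Zero_fract_def using prime_ideal_one_notin[OF M] ideal_zero[OF prime_ideal_ideal[OF M]]
    by blast
  moreover have "x + y \<in> ?m" if "x \<in> ?m" "y \<in> ?m" for x y
  proof -
    obtain a s b u where x: "x = Fract a s" "a \<in> M" "s \<notin> M" and y: "y = Fract b u" "b \<in> M" "u \<notin> M"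
      using \<open>x \<in> ?m\<close> \<open>y \<in> ?m\<close> by blast
    then have "x + y = Fract (u * a + s * b) (s * u)" by (simp add: nonzero algebra_simps)
    moreover have "u * a + s * b \<in> M"
      using x(2) y(2) by (intro ideal_add[OF prime_ideal_ideal[OF M]] ideal_mult[OF prime_ideal_ideal[OF M]])
    moreover have "s * u \<notin> M" using prime_ideal_mult_notin[OF M x(3) y(3)] .
    ultimately show ?thesis by blast
  qed
  moreover have "r * x \<in> ?m" if "r \<in> localization M" "x \<in> ?m" for r x
  proof -
    obtain a s where x: "x = Fract a s" "a \<in> M" "s \<notin> M" using \<open>x \<in> ?m\<close> by blast
    obtain c v where r: "r = Fract c v" "v \<notin> M" using \<open>r \<in> localization M\<close>
      unfolding localization_def by blast
    have "r * x = Fract (c * a) (v * s)" using x r by simp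
    moreover have "c * a \<in> M" using ideal_mult[OF prime_ideal_ideal[OF M] x(2)] .
    moreover have "v * s \<notin> M" using prime_ideal_mult_notin[OF M r(2) x(3)] .
    ultimately show ?thesis by blast
  qed
  ultimately show ?thesis unfolding ideal_in_def by blast
qed

text \<open>\<open>t\<close> generates \<open>M R\<^sub>M\<close>; the condition is \<open>m/1 \<in> t R\<^sub>M\<close> with the denominators cleared.\<close>
definition local_generator :: "'a::comm_ring_1 set \<Rightarrow> 'a \<Rightarrow> bool" where
  "local_generator M t \<longleftrightarrow> t \<in> M \<and> (\<forall>m\<in>M. \<exists>a s. s \<notin> M \<and> s * m = a * t)"

lemma local_generator_if_DVR:
  fixes M :: "'a::idom set"
  assumes M: "prime_ideal_in UNIV M" and DVR: "is_DVR (localization M)"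
  obtains t where "local_generator M t"
proof -
  have nonzero: "s \<noteq> 0" if "s \<notin> M" for s
    using that ideal_zero[OF prime_ideal_ideal[OF M]] by blast
  let ?m = "{Fract a s | a s. a \<in> M \<and> s \<notin> M}"
  have "principal_in (localization M) ?m"
    using DVR ideal_in_localization[OF M] unfolding is_DVR_def by blast
  then obtain g where g: "?m = {r * g | r. r \<in> localization M}"
    unfolding principal_in_def by blast
  have "1 \<in> localization M"
    unfolding localization_def One_fract_def using prime_ideal_one_notin[OF M] by blast
  then have "1 * g \<in> ?m" unfolding g by blast
  then obtain t s0 where t: "g = Fract t s0" "t \<in> M" "s0 \<notin> M" by auto
  have "\<exists>a s. s \<notin> M \<and> s * m = a * t" if "m \<in> M" for m
  proof -
    have "Fract m 1 \<in> ?m" using that prime_ideal_one_notin[OF M] by blast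
    then obtain r where r: "r \<in> localization M" "Fract m 1 = r * g" unfolding g by blast
    then obtain a v where a: "r = Fract a v" "v \<notin> M" unfolding localization_def by blast
    have "v * s0 \<notin> M" using prime_ideal_mult_notin[OF M a(2) t(3)] .
    have "Fract m 1 = Fract (a * t) (v * s0)" using r(2) a(1) t(1) by simp
    then have "(v * s0) * m = a * t"
      using nonzero[OF \<open>v * s0 \<notin> M\<close>] by (simp add: eq_fract mult.commute)
    with \<open>v * s0 \<notin> M\<close> show ?thesis by blast
  qed
  with t(2) have "local_generator M t" unfolding local_generator_def by blast
  then show thesis by (rule that)
qed

lemma mem_ideal_if_locally_mem:
  fixes J :: "'a::comm_ring_1 set"
  assumes J: "ideal_in UNIV J"
    and local: "\<And>N. maximal_ideal_in UNIV N \<Longrightarrow> \<exists>s. s \<notin> N \<and> s * m \<in> J"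
  shows "m \<in> J"
proof (rule ccontr)
  assume "m \<notin> J"
  define K where "K = {r. r * m \<in> J}"
  have K: "ideal_in UNIV K"
  proof (rule ideal_intro)
    show "0 \<in> K" using ideal_zero[OF J] by (simp add: K_def)
    show "a + b \<in> K" if "a \<in> K" "b \<in> K" for a b
      using that ideal_add[OF J] by (simp add: K_def distrib_right)
    show "r * a \<in> K" if "a \<in> K" for r a
      using that ideal_mult[OF J] by (simp add: K_def mult.assoc)
  qed
  have "1 \<notin> K" using \<open>m \<notin> J\<close> by (simp add: K_def)
  then obtain N where "maximal_ideal_in UNIV N" "K \<subseteq> N"
    by (rule maximal_ideal_containing_exists[OF K])
  then show False using local unfolding K_def by blast
qed

lemma ideal_eq_ideal_generated_if_local_generator:
  fixes M :: "'a::comm_ring_1 set"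
  assumes M: "ideal_in UNIV M"
    and F: "finite F" "F \<subseteq> M" "\<And>N. maximal_ideal_in UNIV N \<Longrightarrow> F \<subseteq> N \<Longrightarrow> N = M"
    and t: "local_generator M t"
  shows "M = ideal_generated (insert t F)"
proof
  let ?J = "ideal_generated (insert t F)"
  have J: "ideal_in UNIV ?J" by (rule ideal_generated_ideal)
  have multiple: "a * x \<in> ?J" if "x \<in> insert t F" for a x
    using F(1) that by (intro ideal_mult[OF J] generator_in_ideal_generated) simp_all
  show "?J \<subseteq> M"
    using M F(1,2) t by (intro ideal_generated_subset) (simp_all add: local_generator_def)
  show "M \<subseteq> ?J"
  proof
    fix m assume "m \<in> M"
    show "m \<in> ?J"
    proof (rule mem_ideal_if_locally_mem[OF J])
      fix N :: "'a set" assume N: "maximal_ideal_in UNIV N"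
      show "\<exists>s. s \<notin> N \<and> s * m \<in> ?J"
      proof (cases "N = M")
        case True
        obtain a s where "s \<notin> M" "s * m = a * t"
          using t \<open>m \<in> M\<close> unfolding local_generator_def by blast
        then have "s \<notin> N" "s * m \<in> ?J" using True multiple[of t a] by simp_all
        then show ?thesis by blast
      next
        case False
        then obtain s where "s \<in> F" "s \<notin> N" using F(3)[OF N] by blast
        then have "s \<notin> N" "s * m \<in> ?J" using multiple[of s m] by (simp_all add: mult.commute)
        then show ?thesis by blast
      qed
    qed
  qed
qed

theorem proposition2p3:
  fixes M :: "'a::idom set"
  assumes "almost_dedekind TYPE('a)"
    and "maximal_ideal_in UNIV M"
  shows "isolated_point_in max_inverse M \<longleftrightarrow> finitely_generated_ideal M"
proof
  assume "isolated_point_in max_inverse M"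
  then obtain F where F: "finite F" "F \<subseteq> M" "\<And>N. maximal_ideal_in UNIV N \<Longrightarrow> F \<subseteq> N \<Longrightarrow> N = M"
    using isolated_point_max_inverse_iff[OF assms(2)] by blast
  have "is_DVR (localization M)" using assms unfolding almost_dedekind_def by blast
  then obtain t where t: "local_generator M t"
    by (rule local_generator_if_DVR[OF maximal_imp_prime_ideal[OF assms(2)]])
  have "M = ideal_generated (insert t F)"
    using maximal_ideal_ideal[OF assms(2)] F t by (rule ideal_eq_ideal_generated_if_local_generator)
  then show "finitely_generated_ideal M"
    unfolding finitely_generated_ideal_iff using F(1) by blast
next
  assume "finitely_generated_ideal M"
  then obtain F where F: "finite F" "M = ideal_generated F"
    unfolding finitely_generated_ideal_iff by blast
  have "F \<subseteq> M" using F generator_in_ideal_generated by blast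
  moreover have "N = M" if N: "maximal_ideal_in UNIV N" "F \<subseteq> N" for N
  proof -
    have "M \<subseteq> N" using F N by (simp add: ideal_generated_subset maximal_ideal_ideal)
    then show ?thesis using assms(2) N(1) unfolding maximal_ideal_in_def by blast
  qed
  ultimately show "isolated_point_in max_inverse M"
    using isolated_point_max_inverse_iff[OF assms(2)] F(1) by blast
qed

end
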